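(* Let $G$ be a quasi-semi-simple group, $H$ a Hausdorff topological group, and $\phi:G\to H$ a continuous injective homomorphism. Then $\phi(G)$ is closed in $H$ and $\phi:G\to\phi(G)$ is a homeomorphism (with $\phi(G)$ carrying the subspace topology).
   Context: A locally compact group $G$ is quasi-semi-simple (qss) if there is a closed subgroup $A<G$ such that (i) $G=CAC$ for some compact $C\subset G$; (ii) for every net $(a_\alpha)$ in $A$ converging to infinity there is a subnet $(a_\beta)$ such that $U^{(a_\beta)}_+$ is not precompact and the subgroup generated by $U^{(a_\beta)}_+,U^{(a_\beta)}_-,U^{(a_\beta)}_0$ is dense in $G$, where for a net $(g_\alpha)$: $U^{(g_\alpha)}_+=\{x: g_\alpha^{-1}xg_\alpha\to e\}$, $U^{(g_\alpha)}_-=\{x: g_\alpha xg_\alpha^{-1}\to e\}$, and $U^{(g_\alpha)}_0$ is the set of $x$ such that every subnet of each of the nets $(g_\alpha^{-1}xg_\alpha)$, $(g_\alpha xg_\alpha^{-1})$ admits a converging subnet. *)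

theory Defs
  imports "HOL-Analysis.Analysis"
begin

text \<open>Groups are written additively (class group_add, not necessarily commutative):
  the product g x is written g + x, the inverse of g is - g, the identity is 0.
  Nets are represented, as usual in Isabelle/HOL, by proper filters on the group;
  a subnet of a net corresponds to a finer proper filter.\<close>

definition is_subgroup_add :: "'a::group_add set \<Rightarrow> bool" where
  "is_subgroup_add K \<longleftrightarrow> 0 \<in> K \<and> (\<forall>x\<in>K. \<forall>y\<in>K. x + y \<in> K) \<and> (\<forall>x\<in>K. - x \<in> K)"

definition generated_subgroup_add :: "'a::group_add set \<Rightarrow> 'a set" where
  "generated_subgroup_add X = \<Inter>{K. is_subgroup_add K \<and> X \<subseteq> K}"

definition U_plus :: "'a::topological_group_add filter \<Rightarrow> 'a set" where
  "U_plus F = {x. ((\<lambda>g. - g + x + g) \<longlongrightarrow> 0) F}"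

definition U_minus :: "'a::topological_group_add filter \<Rightarrow> 'a set" where
  "U_minus F = {x. ((\<lambda>g. g + x + - g) \<longlongrightarrow> 0) F}"

definition subnets_have_conv_subnets :: "('a \<Rightarrow> 'b::topological_space) \<Rightarrow> 'a filter \<Rightarrow> bool" where
  "subnets_have_conv_subnets f F \<longleftrightarrow>
     (\<forall>F1. F1 \<noteq> bot \<and> F1 \<le> F \<longrightarrow> (\<exists>F2 l. F2 \<noteq> bot \<and> F2 \<le> F1 \<and> (f \<longlongrightarrow> l) F2))"

definition U_zero :: "'a::topological_group_add filter \<Rightarrow> 'a set" where
  "U_zero F = {x. subnets_have_conv_subnets (\<lambda>g. - g + x + g) F
                 \<and> subnets_have_conv_subnets (\<lambda>g. g + x + - g) F}"

definition tends_to_infinity :: "'a::topological_space filter \<Rightarrow> bool" where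
  "tends_to_infinity F \<longleftrightarrow> (\<forall>K. compact K \<longrightarrow> eventually (\<lambda>g. g \<notin> K) F)"

definition quasi_semi_simple :: "'a::{topological_group_add, t2_space} itself \<Rightarrow> bool" where
  "quasi_semi_simple _ \<longleftrightarrow> locally compact (UNIV :: 'a set) \<and>
    (\<exists>A :: 'a set. closed A \<and> is_subgroup_add A \<and>
       (\<exists>C. compact C \<and> UNIV = {c1 + a + c2 | c1 a c2. c1 \<in> C \<and> a \<in> A \<and> c2 \<in> C}) \<and>
       (\<forall>F. F \<noteq> bot \<and> eventually (\<lambda>g. g \<in> A) F \<and> tends_to_infinity F \<longrightarrow>
          (\<exists>F'. F' \<noteq> bot \<and> F' \<le> F \<and> \<not> compact (closure (U_plus F')) \<and>
               closure (generated_subgroup_add (U_plus F' \<union> U_minus F' \<union> U_zero F')) = UNIV)))"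

end

theory Submission
  imports Defs
begin

(* An injective continuous homomorphism phi from a quasi-semi-simple group G into a
   Hausdorff group H is a closed map; closedness of phi(G) and the homeomorphism onto
   phi(G) follow at once.

   Let phi converge to h along a net F.  If F does not tend to
   infinity, some subnet stays in a compact set and converges to g, so phi g = h.  If F
   tends to infinity we derive a contradiction: writing g = c1 + a + c2 with c1, c2 in
   the compact set C and a in A, a subnet makes c1 and c2 converge, so phi(a) converges
   while the net a tends to infinity in A.  The qss property then yields a subnet F'
   with non-precompact U_plus F', but convergence of phi along F' together with
   injectivity forces U_plus F' to be trivial. *)

lemma hom_zero:
  fixes \<phi> :: "'a::group_add \<Rightarrow> 'b::group_add"
  assumes hom: "\<And>x y. \<phi> (x + y) = \<phi> x + \<phi> y"
  shows "\<phi> 0 = 0"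
  using hom[of 0 0] by (metis add.right_neutral add_left_cancel)

lemma hom_minus:
  fixes \<phi> :: "'a::group_add \<Rightarrow> 'b::group_add"
  assumes hom: "\<And>x y. \<phi> (x + y) = \<phi> x + \<phi> y"
  shows "\<phi> (- x) = - \<phi> x"
  using hom[of x "- x"] hom_zero[OF hom] by (metis add.right_inverse minus_unique)

lemma hom_conj:
  fixes \<phi> :: "'a::group_add \<Rightarrow> 'b::group_add"
  assumes hom: "\<And>x y. \<phi> (x + y) = \<phi> x + \<phi> y"
  shows "\<phi> (- g + x + g) = - \<phi> g + \<phi> x + \<phi> g"
  by (simp only: hom hom_minus[OF hom])

lemma cluster_point_subnet_proper:
  assumes "inf (nhds l) (filtermap f F) \<noteq> bot"
  shows "inf F (filtercomap f (nhds l)) \<noteq> bot"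
proof
  assume "inf F (filtercomap f (nhds l)) = bot"
  then obtain P Q where P: "eventually P F" and Q: "eventually Q (filtercomap f (nhds l))"
    and PQ: "\<And>x. P x \<Longrightarrow> Q x \<Longrightarrow> False"
    unfolding eventually_False[symmetric] eventually_inf by blast
  from Q obtain R where R: "eventually R (nhds l)" and RQ: "\<And>x. R (f x) \<Longrightarrow> Q x"
    unfolding eventually_filtercomap by blast
  have "eventually (\<lambda>y. \<not> R y) (filtermap f F)"
    unfolding eventually_filtermap using P by (rule eventually_mono) (use PQ RQ in blast)
  with R have "eventually (\<lambda>_. False) (inf (nhds l) (filtermap f F))"
    unfolding eventually_inf by blast
  with assms show False by (simp add: eventually_False)
qed

lemma closure_iff_cluster_point:
  "a \<in> closure A \<longleftrightarrow> inf (nhds a) (principal A) \<noteq> bot"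
proof -
  have "inf (nhds a) (principal A) = bot \<longleftrightarrow> eventually (\<lambda>x. x \<notin> A) (nhds a)"
    unfolding eventually_False[symmetric] eventually_inf_principal by simp
  also have "\<dots> \<longleftrightarrow> a \<notin> closure A"
    unfolding eventually_nhds closure_iff_nhds_not_empty by blast
  finally show ?thesis by blast
qed

lemma compact_converging_subnet:
  assumes K: "compact K" and F: "F \<noteq> bot" and ev: "eventually (\<lambda>x. f x \<in> K) F"
  obtains F1 l where "F1 \<noteq> bot" "F1 \<le> F" "l \<in> K" "(f \<longlongrightarrow> l) F1"
proof -
  have "filtermap f F \<noteq> bot" using F by (simp add: filtermap_bot_iff)
  moreover have "eventually (\<lambda>y. y \<in> K) (filtermap f F)"
    using ev by (simp add: eventually_filtermap)
  ultimately obtain l where "l \<in> K" and l: "inf (nhds l) (filtermap f F) \<noteq> bot"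
    using K unfolding compact_filter by blast
  have "(f \<longlongrightarrow> l) (inf F (filtercomap f (nhds l)))"
    by (rule filterlim_mono[OF filterlim_filtercomap order.refl inf_le2])
  with \<open>l \<in> K\<close> show ?thesis
    using that[OF cluster_point_subnet_proper[OF l] inf_le1] by blast
qed

lemma tends_to_infinity_middle_factor:
  fixes c1 a c2 :: "'a::topological_group_add \<Rightarrow> 'a"
  assumes C: "compact C" and inf: "tends_to_infinity F"
    and mem: "\<And>g. c1 g \<in> C \<and> c2 g \<in> C" and dec: "\<And>g. c1 g + a g + c2 g = g"
  shows "tends_to_infinity (filtermap a F)"
  unfolding tends_to_infinity_def
proof (intro allI impI)
  fix K :: "'a set" assume K: "compact K"
  define S where "S = (\<lambda>(x, y, z). x + y + z) ` (C \<times> K \<times> C)"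
  have "compact S" unfolding S_def
    by (intro compact_continuous_image compact_Times C K)
       (auto intro!: continuous_intros simp: split_beta)
  then have "eventually (\<lambda>g. g \<notin> S) F" using inf by (simp add: tends_to_infinity_def)
  moreover have "a g \<notin> K" if "g \<notin> S" for g
  proof
    assume "a g \<in> K"
    then have "c1 g + a g + c2 g \<in> S" using mem[of g] unfolding S_def by force
    with that show False by (simp only: dec)
  qed
  ultimately show "eventually (\<lambda>g. g \<notin> K) (filtermap a F)"
    by (simp add: eventually_filtermap eventually_mono)
qed

text \<open>If an injective continuous homomorphism converges along a proper net, the
  \<open>U_plus\<close> of that net is trivial: \<open>\<phi> x\<close> is the limit of the conjugates
  \<open>\<phi> g + \<phi> (- g + x + g) - \<phi> g\<close>, which tend to \<open>k + 0 - k = 0\<close>.\<close>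
lemma U_plus_trivial_if_hom_converges:
  fixes \<phi> :: "'a::topological_group_add \<Rightarrow> 'b::{topological_group_add, t2_space}"
  assumes cont: "continuous_on UNIV \<phi>" and inj: "inj \<phi>"
    and hom: "\<And>x y. \<phi> (x + y) = \<phi> x + \<phi> y"
    and F: "F \<noteq> bot" and lim: "(\<phi> \<longlongrightarrow> k) F"
  shows "U_plus F \<subseteq> {0}"
proof
  fix x assume "x \<in> U_plus F"
  then have "((\<lambda>g. - g + x + g) \<longlongrightarrow> 0) F" unfolding U_plus_def by simp
  then have "((\<lambda>g. \<phi> (- g + x + g)) \<longlongrightarrow> 0) F"
    using continuous_on_tendsto_compose[OF cont] hom_zero[OF hom] by fastforce
  then have "((\<lambda>g. \<phi> g + \<phi> (- g + x + g) + - \<phi> g) \<longlongrightarrow> k + 0 + - k) F"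
    by (intro tendsto_add tendsto_minus lim)
  moreover have "\<phi> g + \<phi> (- g + x + g) + - \<phi> g = \<phi> x" for g
    by (simp only: hom_conj[OF hom]) (simp add: add.assoc)
  ultimately have "((\<lambda>g. \<phi> x) \<longlongrightarrow> 0) F" by simp
  then have "\<phi> x = \<phi> 0" using tendsto_unique[OF F tendsto_const] hom_zero[OF hom] by metis
  then show "x \<in> {0}" using inj by (simp add: inj_eq)
qed

lemma qss_hom_diverges_at_infinity:
  fixes \<phi> :: "'a::{topological_group_add, t2_space} \<Rightarrow> 'b::{topological_group_add, t2_space}"
  assumes qss: "quasi_semi_simple TYPE('a)"
    and cont: "continuous_on UNIV \<phi>" and inj: "inj \<phi>"
    and hom: "\<And>x y. \<phi> (x + y) = \<phi> x + \<phi> y"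
    and F: "F \<noteq> bot" and inf: "tends_to_infinity F"
  shows "\<not> (\<phi> \<longlongrightarrow> h) F"
proof
  assume lim: "(\<phi> \<longlongrightarrow> h) F"
  from qss obtain A C where C: "compact C"
    and CAC: "(UNIV::'a set) = {c1 + a + c2 | c1 a c2. c1 \<in> C \<and> a \<in> A \<and> c2 \<in> C}"
    and qss_A: "\<And>F. F \<noteq> bot \<Longrightarrow> eventually (\<lambda>g. g \<in> A) F \<Longrightarrow> tends_to_infinity F \<Longrightarrow>
          \<exists>F'. F' \<noteq> bot \<and> F' \<le> F \<and> \<not> compact (closure (U_plus F')) \<and>
               closure (generated_subgroup_add (U_plus F' \<union> U_minus F' \<union> U_zero F')) = UNIV"
    unfolding quasi_semi_simple_def by blast
  have "\<forall>g. \<exists>x y z. x \<in> C \<and> y \<in> A \<and> z \<in> C \<and> x + y + z = g"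
  proof
    fix g :: 'a
    have "g \<in> {c1 + a + c2 | c1 a c2. c1 \<in> C \<and> a \<in> A \<and> c2 \<in> C}" using CAC by blast
    then show "\<exists>x y z. x \<in> C \<and> y \<in> A \<and> z \<in> C \<and> x + y + z = g" by blast
  qed
  then obtain c1 a c2 where mem: "\<And>g. c1 g \<in> C \<and> a g \<in> A \<and> c2 g \<in> C"
    and dec: "\<And>g. c1 g + a g + c2 g = g"
    by metis
  have phi_a: "\<phi> (a g) = - \<phi> (c1 g) + \<phi> g + - \<phi> (c2 g)" for g
  proof -
    have "a g = - c1 g + (c1 g + a g + c2 g) + - c2 g" by (simp add: add.assoc)
    then show ?thesis by (simp only: dec hom hom_minus[OF hom])
  qed
  have ev_CC: "eventually (\<lambda>g. (c1 g, c2 g) \<in> C \<times> C) F" using mem by simp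
  obtain F1 p where F1: "F1 \<noteq> bot" "F1 \<le> F"
    and lim_c: "((\<lambda>g. (c1 g, c2 g)) \<longlongrightarrow> p) F1"
    using compact_converging_subnet[OF compact_Times[OF C C] F ev_CC] by blast
  have lim_c1: "(c1 \<longlongrightarrow> fst p) F1" and lim_c2: "(c2 \<longlongrightarrow> snd p) F1"
    using tendsto_fst[OF lim_c] tendsto_snd[OF lim_c] by simp_all
  define k where "k = - \<phi> (fst p) + h + - \<phi> (snd p)"
  have "((\<lambda>g. - \<phi> (c1 g) + \<phi> g + - \<phi> (c2 g)) \<longlongrightarrow> k) F1"
    unfolding k_def
    by (intro tendsto_add tendsto_minus continuous_on_tendsto_compose[OF cont]
        lim_c1 lim_c2 tendsto_mono[OF F1(2) lim]) auto
  then have lim_a: "(\<phi> \<longlongrightarrow> k) (filtermap a F1)"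
    by (simp only: filterlim_filtermap phi_a)
  have inf_F1: "tends_to_infinity F1"
    using inf F1(2) by (auto simp: tends_to_infinity_def filter_leD)
  have "filtermap a F1 \<noteq> bot" using F1(1) by (simp add: filtermap_bot_iff)
  moreover have "eventually (\<lambda>g. g \<in> A) (filtermap a F1)"
    using mem by (simp add: eventually_filtermap)
  moreover have "tends_to_infinity (filtermap a F1)"
    using inf_F1 mem by (intro tends_to_infinity_middle_factor[OF C _ _ dec]) auto
  ultimately obtain F' where F': "F' \<noteq> bot" "F' \<le> filtermap a F1"
    and noncompact: "\<not> compact (closure (U_plus F'))"
    using qss_A by blast
  have "closure (U_plus F') \<subseteq> {0}"
    using U_plus_trivial_if_hom_converges[OF cont inj hom F'(1) tendsto_mono[OF F'(2) lim_a]]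
    by (simp add: closure_minimal)
  then have "compact (closure (U_plus F'))"
    by (rule finite_imp_compact[OF finite_subset]) simp
  with noncompact show False by simp
qed

lemma qss_hom_lifts_limits:
  fixes \<phi> :: "'a::{topological_group_add, t2_space} \<Rightarrow> 'b::{topological_group_add, t2_space}"
  assumes qss: "quasi_semi_simple TYPE('a)"
    and cont: "continuous_on UNIV \<phi>" and inj: "inj \<phi>"
    and hom: "\<And>x y. \<phi> (x + y) = \<phi> x + \<phi> y"
    and F: "F \<noteq> bot" and lim: "(\<phi> \<longlongrightarrow> h) F"
  obtains F1 g where "F1 \<noteq> bot" "F1 \<le> F" "((\<lambda>x. x) \<longlongrightarrow> g) F1" "\<phi> g = h"
proof -
  have "\<not> tends_to_infinity F"
    using qss_hom_diverges_at_infinity[OF qss cont inj hom F] lim by blast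
  then obtain K where K: "compact K" "\<not> eventually (\<lambda>x. x \<notin> K) F"
    unfolding tends_to_infinity_def by blast
  have FK: "inf F (principal K) \<noteq> bot"
  proof
    assume "inf F (principal K) = bot"
    then have "eventually (\<lambda>_. False) (inf F (principal K))" by simp
    with K(2) show False unfolding eventually_inf_principal by simp
  qed
  have ev_K: "eventually (\<lambda>x. x \<in> K) (inf F (principal K))"
    by (simp add: eventually_inf_principal)
  obtain F1 g where F1: "F1 \<noteq> bot" "F1 \<le> inf F (principal K)"
    and g: "((\<lambda>x. x) \<longlongrightarrow> g) F1"
    using compact_converging_subnet[OF K(1) FK ev_K] by blast
  have F1_F: "F1 \<le> F" using F1(2) by simp
  have "(\<phi> \<longlongrightarrow> \<phi> g) F1" using continuous_on_tendsto_compose[OF cont g] by simp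
  moreover have "(\<phi> \<longlongrightarrow> h) F1" using tendsto_mono[OF F1_F lim] .
  ultimately have "\<phi> g = h" using F1(1) tendsto_unique by blast
  then show ?thesis by (rule that[OF F1(1) F1_F g])
qed

text \<open>A limit point of \<open>\<phi> ` S\<close> is a limit of \<open>\<phi>\<close> along the trace on \<open>S\<close> of the preimage
  of its neighbourhood filter; lifting it gives a limit point of the closed set \<open>S\<close>.\<close>
lemma qss_hom_closed_map:
  fixes \<phi> :: "'a::{topological_group_add, t2_space} \<Rightarrow> 'b::{topological_group_add, t2_space}"
  assumes qss: "quasi_semi_simple TYPE('a)"
    and cont: "continuous_on UNIV \<phi>" and inj: "inj \<phi>"
    and hom: "\<And>x y. \<phi> (x + y) = \<phi> x + \<phi> y"
    and S: "closed S"
  shows "closed (\<phi> ` S)"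
proof -
  have "h \<in> \<phi> ` S" if "h \<in> closure (\<phi> ` S)" for h
  proof -
    define F where "F = inf (principal S) (filtercomap \<phi> (nhds h))"
    have "inf (nhds h) (filtermap \<phi> (principal S)) \<noteq> bot"
      using that by (simp add: closure_iff_cluster_point)
    then have F: "F \<noteq> bot" unfolding F_def by (rule cluster_point_subnet_proper)
    have "(\<phi> \<longlongrightarrow> h) F" unfolding F_def
      by (rule filterlim_mono[OF filterlim_filtercomap order.refl inf_le2])
    then obtain F1 g where F1: "F1 \<noteq> bot" "F1 \<le> F" "((\<lambda>x. x) \<longlongrightarrow> g) F1"
      and g_h: "\<phi> g = h"
      using qss_hom_lifts_limits[OF qss cont inj hom F] by blast
    have "eventually (\<lambda>x. x \<in> S) F1"
      using F1(2) unfolding F_def le_principal[symmetric] by simp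
    then have "g \<in> S" using Lim_in_closed_set[OF S _ F1(1,3)] by simp
    with g_h show ?thesis by blast
  qed
  then show ?thesis by (metis closure_subset_eq subsetI)
qed

theorem theorem5p1:
  fixes \<phi> :: "'a::{topological_group_add, t2_space} \<Rightarrow> 'b::{topological_group_add, t2_space}"
  assumes "quasi_semi_simple TYPE('a)"
    and "continuous_on UNIV \<phi>"
    and "inj \<phi>"
    and "\<And>x y. \<phi> (x + y) = \<phi> x + \<phi> y"
  shows "closed (range \<phi>) \<and> (\<exists>\<psi>. homeomorphism UNIV (range \<phi>) \<phi> \<psi>)"
proof -
  note closed_map = qss_hom_closed_map[OF assms]
  obtain \<psi> where "homeomorphism UNIV (range \<phi>) \<phi> \<psi>"
  proof (rule homeomorphism_injective_closed_map[OF assms(2) refl])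
    show "inj_on \<phi> UNIV" using assms(3) by simp
    show "closedin (top_of_set (range \<phi>)) (\<phi> ` U)" if "closedin (top_of_set UNIV) U" for U
      using that closed_map by (intro closed_subset) (auto simp: closedin_closed)
  qed
  then show ?thesis using closed_map[of UNIV] by auto
qed

end
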